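(* Let $\gamma>1$ and let $f\in\mathcal K_\infty$ satisfy $f(x)>x$ for all $x>0$. Then there exists $g\in\mathcal K$ such that $g(f(x))=\gamma\,g(x)$ for all $x\in\mathbb R_+$.
   Context: $\mathcal K$: continuous strictly increasing functions $\alpha:\mathbb R_+\to\mathbb R_+$ with $\alpha(0)=0$; $\mathcal K_\infty$: those $\alpha\in\mathcal K$ with $\lim_{x\to+\infty}\alpha(x)=+\infty$. *)

theory Defs
  imports Complex_Main
begin

definition class_K :: "(real \<Rightarrow> real) \<Rightarrow> bool" where
  "class_K \<alpha> \<longleftrightarrow> continuous_on {0..} \<alpha> \<and> strict_mono_on {0..} \<alpha> \<and> \<alpha> 0 = 0
     \<and> (\<forall>x\<ge>0. \<alpha> x \<ge> 0)"

definition class_K_inf :: "(real \<Rightarrow> real) \<Rightarrow> bool" where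
  "class_K_inf \<alpha> \<longleftrightarrow> class_K \<alpha> \<and> filterlim \<alpha> at_top at_top"

end

theory Submission
  imports Defs
begin

text \<open>The two-sided orbit \<open>p n = f\<^sup>n 1\<close> (\<open>n \<in> \<int>\<close>) is strictly increasing; it tends to \<open>\<infinity>\<close> and to \<open>0\<close>
  because a finite positive limit would be a fixed point of \<open>f\<close>. So the intervals \<open>[p n, p (n+1))\<close>
  tile \<open>(0,\<infinity>)\<close>, and \<open>f\<^sup>-\<^sup>n\<close> maps the \<open>n\<close>-th of them onto the fundamental domain \<open>[1, f 1)\<close>.
  With \<open>\<phi>\<close> the affine map of \<open>[1, f 1]\<close> onto \<open>[1, \<gamma>]\<close>, the function \<open>g x = \<gamma>\<^sup>n \<phi> (f\<^sup>-\<^sup>n x)\<close> on the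
  \<open>n\<close>-th interval solves \<open>g \<circ> f = \<gamma> g\<close>. It is a strictly increasing bijection of \<open>(0,\<infinity>)\<close>, hence
  continuous.\<close>

lemma strict_mono_intI:
  fixes p :: "int \<Rightarrow> 'a::order"
  assumes "\<And>n. p n < p (n + 1)"
  shows "strict_mono p"
proof
  fix m n :: int
  assume "m < n"
  then show "p m < p n"
  proof (induction n rule: int_gr_induct)
    case base
    then show ?case using assms by simp
  next
    case (step i)
    then show ?case using assms[of i] by (blast intro: order.strict_trans)
  qed
qed

lemma mono_int_bracket:
  fixes p :: "int \<Rightarrow> 'a::linorder"
  assumes "mono p" and "p m \<le> x" and "x < p N"
  shows "\<exists>n. p n \<le> x \<and> x < p (n + 1)"
proof -
  have bracket: "\<exists>n. p n \<le> x \<and> x < p (n + 1)" if "x < p (m + int k)" for k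
    using that
  proof (induction k)
    case 0
    then show ?case using assms(2) by simp
  next
    case (Suc k)
    show ?case
    proof (cases "x < p (m + int k)")
      case True
      then show ?thesis by (rule Suc.IH)
    next
      case False
      then show ?thesis using Suc.prems by (intro exI[of _ "m + int k"]) (simp add: ac_simps)
    qed
  qed
  have "m < N"
    using assms monoD[OF assms(1), of N m] by (cases "m < N") auto
  then have "x < p (m + int (nat (N - m)))" using assms(3) by simp
  then show ?thesis by (rule bracket)
qed

definition interval_index :: "(int \<Rightarrow> 'a::linorder) \<Rightarrow> 'a \<Rightarrow> int" where
  "interval_index p x = (THE n. p n \<le> x \<and> x < p (n + 1))"

lemma interval_index_eq:
  fixes p :: "int \<Rightarrow> 'a::linorder"
  assumes "mono p" and "p n \<le> x" and "x < p (n + 1)"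
  shows "interval_index p x = n"
  unfolding interval_index_def
proof (rule the_equality)
  show "p n \<le> x \<and> x < p (n + 1)" using assms by simp
next
  fix k
  assume k: "p k \<le> x \<and> x < p (k + 1)"
  show "k = n"
  proof (rule ccontr)
    assume "k \<noteq> n"
    then consider "n + 1 \<le> k" | "k + 1 \<le> n" by linarith
    then show False
    proof cases
      case 1
      then show False using monoD[OF assms(1) 1] assms(3) k by (meson not_le order.trans)
    next
      case 2
      then show False using monoD[OF assms(1) 2] assms(2) k by (meson not_le order.trans)
    qed
  qed
qed

lemma limit_is_fixed_point:
  fixes h :: "'a::t2_space \<Rightarrow> 'a"
  assumes "continuous_on S h" and "L \<in> S" and "\<And>k. s k \<in> S"
    and "s \<longlonglongrightarrow> L" and "(\<lambda>k. h (s k)) \<longlonglongrightarrow> L"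
  shows "h L = L"
proof -
  have "(\<lambda>k. h (s k)) \<longlonglongrightarrow> h L"
    using assms(3) by (intro continuous_on_tendsto_compose[OF assms(1,4,2)]) simp
  from this assms(5) show ?thesis by (rule LIMSEQ_unique)
qed

lemma powr_floor_log_bracket:
  fixes b y :: real
  assumes "1 < b" and "0 < y"
  shows "b powr \<lfloor>log b y\<rfloor> \<le> y" and "y < b powr (\<lfloor>log b y\<rfloor> + 1)"
proof -
  have "b powr \<lfloor>log b y\<rfloor> \<le> b powr log b y"
    using assms by (intro powr_mono) auto
  then show "b powr \<lfloor>log b y\<rfloor> \<le> y" using assms by simp
  have "b powr log b y < b powr (\<lfloor>log b y\<rfloor> + 1)"
    using assms by (intro powr_less_mono) linarith+
  then show "y < b powr (\<lfloor>log b y\<rfloor> + 1)" using assms by simp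
qed

locale ray_automorphism =
  fixes f :: "real \<Rightarrow> real"
  assumes strict_mono: "strict_mono_on {0..} f"
    and image: "f ` {0..} = {0..}"
begin

lemma less_iff: "0 \<le> x \<Longrightarrow> 0 \<le> y \<Longrightarrow> f x < f y \<longleftrightarrow> x < y"
  using strict_mono_on_less[OF strict_mono] by simp

lemma le_iff: "0 \<le> x \<Longrightarrow> 0 \<le> y \<Longrightarrow> f x \<le> f y \<longleftrightarrow> x \<le> y"
  using strict_mono_on_less_eq[OF strict_mono] by simp

lemma nonneg: "0 \<le> x \<Longrightarrow> 0 \<le> f x"
  using image by auto

lemma inj: "inj_on f {0..}"
  by (rule strict_mono_on_imp_inj_on[OF strict_mono])

definition finv :: "real \<Rightarrow> real" where
  "finv = the_inv_into {0..} f"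

lemma finv_f: "0 \<le> x \<Longrightarrow> finv (f x) = x"
  by (simp add: finv_def the_inv_into_f_f[OF inj])

lemma f_finv: "0 \<le> y \<Longrightarrow> f (finv y) = y"
  unfolding finv_def by (rule f_the_inv_into_f[OF inj]) (simp add: image)

lemma finv_nonneg: "0 \<le> y \<Longrightarrow> 0 \<le> finv y"
  unfolding finv_def using the_inv_into_into[OF inj, of y "{0..}"] image by simp

lemma finv_less_iff: "0 \<le> x \<Longrightarrow> 0 \<le> y \<Longrightarrow> finv x < finv y \<longleftrightarrow> x < y"
  using less_iff[of "finv x" "finv y"] by (simp add: finv_nonneg f_finv)

lemma zero: "f 0 = 0"
proof -
  obtain a where a: "0 \<le> a" "f a = 0"
    using image by (metis atLeast_iff imageE order_refl)
  then have "f 0 \<le> 0" using less_iff[of a 0] by (cases "a = 0") auto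
  then show ?thesis using nonneg[of 0] by simp
qed

lemma finv_zero: "finv 0 = 0"
  using finv_f[of 0] by (simp add: zero)

definition iter :: "int \<Rightarrow> real \<Rightarrow> real" where
  "iter n = (if 0 \<le> n then f ^^ nat n else finv ^^ nat (- n))"

lemma iter_nonneg: "0 \<le> x \<Longrightarrow> 0 \<le> iter n x"
proof -
  have "0 \<le> (f ^^ k) x" "0 \<le> (finv ^^ k) x" if "0 \<le> x" for k x
    using that by (induction k) (simp_all add: nonneg finv_nonneg)
  then show "0 \<le> x \<Longrightarrow> 0 \<le> iter n x" by (simp add: iter_def)
qed

lemma iter_0 [simp]: "iter 0 x = x"
  by (simp add: iter_def)

lemma iter_succ: "0 \<le> x \<Longrightarrow> iter (n + 1) x = f (iter n x)"
proof (cases "0 \<le> n")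
  case True
  then have "nat (n + 1) = Suc (nat n)" by simp
  then show ?thesis using True by (simp add: iter_def)
next
  case False
  assume "0 \<le> x"
  have "nat (- n) = Suc (nat (- (n + 1)))" using False by simp
  then have "iter n x = finv (iter (n + 1) x)" using False by (simp add: iter_def)
  then show ?thesis using iter_nonneg[OF \<open>0 \<le> x\<close>] by (simp add: f_finv)
qed

lemma iter_pred: "0 \<le> x \<Longrightarrow> iter (n - 1) x = finv (iter n x)"
  using iter_succ[of x "n - 1"] iter_nonneg by (simp add: finv_f)

lemma iter_add: "0 \<le> x \<Longrightarrow> iter m (iter n x) = iter (m + n) x"
proof (induction m rule: int_induct[where k = 0])
  case base
  then show ?case by simp
next
  case (step1 i)
  have "iter (i + 1) (iter n x) = f (iter (i + n) x)"
    using step1 by (simp add: iter_succ iter_nonneg)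
  also have "\<dots> = iter (i + 1 + n) x"
    using iter_succ[OF step1.prems, of "i + n"] by (simp add: ac_simps)
  finally show ?case .
next
  case (step2 i)
  have "iter (i - 1) (iter n x) = finv (iter (i + n) x)"
    using step2 by (simp add: iter_pred iter_nonneg)
  also have "\<dots> = iter (i - 1 + n) x"
    using iter_pred[OF step2.prems, of "i + n"] by (simp add: algebra_simps)
  finally show ?case .
qed

lemma strict_mono_on_iter: "strict_mono_on {0..} (iter n)"
proof (induction n rule: int_induct[where k = 0])
  case base
  then show ?case by (simp add: strict_mono_on_def)
next
  case (step1 i)
  then show ?case by (simp add: strict_mono_on_def iter_succ iter_nonneg less_iff)
next
  case (step2 i)
  then show ?case by (simp add: strict_mono_on_def iter_pred iter_nonneg finv_less_iff)
qed

lemma iter_less_iff: "0 \<le> x \<Longrightarrow> 0 \<le> y \<Longrightarrow> iter n x < iter n y \<longleftrightarrow> x < y"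
  using strict_mono_on_less[OF strict_mono_on_iter] by simp

lemma iter_le_iff: "0 \<le> x \<Longrightarrow> 0 \<le> y \<Longrightarrow> iter n x \<le> iter n y \<longleftrightarrow> x \<le> y"
  using strict_mono_on_less_eq[OF strict_mono_on_iter] by simp

lemma iter_zero [simp]: "iter n 0 = 0"
  by (induction n rule: int_induct[where k = 0])
    (simp_all add: iter_succ iter_pred zero finv_zero)

end

locale expanding_ray_homeomorphism = ray_automorphism +
  assumes continuous: "continuous_on {0..} f"
    and expanding: "\<And>x. 0 < x \<Longrightarrow> x < f x"
begin

definition orbit :: "int \<Rightarrow> real" where
  "orbit n = iter n 1"

lemma orbit_pos: "0 < orbit n"
  using iter_less_iff[of 0 1 n] by (simp add: orbit_def)

lemma orbit_succ: "orbit (n + 1) = f (orbit n)"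
  by (simp add: orbit_def iter_succ)

lemma orbit_0 [simp]: "orbit 0 = 1"
  by (simp add: orbit_def)

lemma orbit_1 [simp]: "orbit 1 = f 1"
  using orbit_succ[of 0] by simp

lemma iter_orbit: "iter m (orbit n) = orbit (m + n)"
  by (simp add: orbit_def iter_add)

lemma strict_mono_orbit: "strict_mono orbit"
  by (rule strict_mono_intI) (simp add: orbit_succ expanding orbit_pos)

lemma orbit_unbounded: "\<exists>n. x < orbit n"
proof (rule ccontr)
  assume "\<nexists>n. x < orbit n"
  then have "\<forall>k. orbit (int k) \<le> x" by (simp add: not_less)
  moreover have "incseq (\<lambda>k. orbit (int k))"
    using strict_mono_orbit by (simp add: incseq_def strict_mono_less_eq)
  ultimately obtain L where L: "(\<lambda>k. orbit (int k)) \<longlonglongrightarrow> L" "\<forall>k. orbit (int k) \<le> L"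
    using incseq_convergent by blast
  have "0 < L" using L(2) orbit_pos[of 0] by (metis of_nat_0 order_less_le_trans)
  have "f (orbit (int k)) = orbit (int (Suc k))" for k
    using orbit_succ[of "int k"] by (simp add: add.commute)
  then have "(\<lambda>k. f (orbit (int k))) \<longlonglongrightarrow> L"
    using LIMSEQ_Suc[OF L(1)] by simp
  then have "f L = L"
    using \<open>0 < L\<close> orbit_pos
    by (intro limit_is_fixed_point[OF continuous _ _ L(1)]) (auto intro: less_imp_le)
  with expanding[OF \<open>0 < L\<close>] show False by simp
qed

lemma orbit_small: "0 < x \<Longrightarrow> \<exists>n. orbit n \<le> x"
proof (rule ccontr)
  assume "0 < x" and "\<nexists>n. orbit n \<le> x"
  then have bound: "\<forall>k. x \<le> orbit (- int k)" by (simp add: not_le less_imp_le)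
  moreover have "decseq (\<lambda>k. orbit (- int k))"
    using strict_mono_orbit by (simp add: decseq_def strict_mono_less_eq)
  ultimately obtain L where L: "(\<lambda>k. orbit (- int k)) \<longlonglongrightarrow> L"
    using decseq_convergent by blast
  have "x \<le> L" using bound by (intro LIMSEQ_le_const[OF L]) auto
  then have "0 < L" using \<open>0 < x\<close> by simp
  have "f (orbit (- int (Suc k))) = orbit (- int k)" for k
    using orbit_succ[of "- int (Suc k)"] by simp
  then have "(\<lambda>k. f (orbit (- int (Suc k)))) \<longlonglongrightarrow> L" using L by simp
  then have "f L = L"
    using \<open>0 < L\<close> orbit_pos LIMSEQ_Suc[OF L]
    by (intro limit_is_fixed_point[OF continuous]) (auto intro: less_imp_le)
  with expanding[OF \<open>0 < L\<close>] show False by simp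
qed

lemma orbit_interval:
  assumes "0 < x"
  obtains n where "orbit n \<le> x" and "x < orbit (n + 1)"
  using orbit_small[OF assms] orbit_unbounded[of x] strict_mono_mono[OF strict_mono_orbit]
    mono_int_bracket by blast

end

locale schroeder_construction = expanding_ray_homeomorphism +
  fixes \<gamma> :: real
  assumes gamma_gt_1: "1 < \<gamma>"
begin

lemma one_less_f_1: "1 < f 1"
  using expanding[of 1] by simp

definition phi :: "real \<Rightarrow> real" where
  "phi y = 1 + (\<gamma> - 1) * (y - 1) / (f 1 - 1)"

lemma phi_less_iff: "phi y < phi z \<longleftrightarrow> y < z"
  using one_less_f_1 gamma_gt_1 by (simp add: phi_def divide_less_cancel)

lemma phi_le_iff: "phi y \<le> phi z \<longleftrightarrow> y \<le> z"
  using phi_less_iff by (meson not_le)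

lemma phi_1 [simp]: "phi 1 = 1"
  by (simp add: phi_def)

lemma phi_f_1 [simp]: "phi (f 1) = \<gamma>"
  using one_less_f_1 by (simp add: phi_def)

lemma phi_surj:
  assumes "1 \<le> t" and "t < \<gamma>"
  obtains y where "1 \<le> y" and "y < f 1" and "phi y = t"
proof
  define y where "y = 1 + (t - 1) * (f 1 - 1) / (\<gamma> - 1)"
  show "phi y = t"
    using one_less_f_1 gamma_gt_1 by (simp add: phi_def y_def)
  then show "1 \<le> y" and "y < f 1"
    using assms phi_le_iff[of 1 y] phi_less_iff[of y "f 1"] by simp_all
qed

text \<open>Extended by the identity to \<open>x \<le> 0\<close>, the solution becomes a strictly increasing bijection
  of \<open>\<real>\<close>; continuity then comes for free from \<open>continuous_onI_mono\<close>.\<close>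

definition schroeder :: "real \<Rightarrow> real" where
  "schroeder x =
    (if x \<le> 0 then x
     else let n = interval_index orbit x in \<gamma> powr n * phi (iter (- n) x))"

lemma schroeder_on_interval:
  assumes "orbit n \<le> x" and "x < orbit (n + 1)"
  shows "schroeder x = \<gamma> powr n * phi (iter (- n) x)"
proof -
  have "0 < x" using assms(1) orbit_pos[of n] by linarith
  moreover have "interval_index orbit x = n"
    using interval_index_eq[OF strict_mono_mono[OF strict_mono_orbit] assms] .
  ultimately show ?thesis by (simp add: schroeder_def)
qed

lemma iter_orbit_interval:
  assumes "orbit n \<le> x" and "x < orbit (n + 1)"
  shows "1 \<le> iter (- n) x" and "iter (- n) x < f 1"
  using iter_le_iff[of "orbit n" x "- n"] iter_less_iff[of x "orbit (n + 1)" "- n"]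
    assms orbit_pos[of n] by (simp_all add: iter_orbit)

lemma schroeder_on_interval_bounds:
  assumes "orbit n \<le> x" and "x < orbit (n + 1)"
  shows "\<gamma> powr n \<le> schroeder x" and "schroeder x < \<gamma> powr (n + 1)"
proof -
  have "1 \<le> phi (iter (- n) x)" and "phi (iter (- n) x) < \<gamma>"
    using iter_orbit_interval[OF assms] phi_le_iff[of 1] phi_less_iff[of _ "f 1"] by simp_all
  then show "\<gamma> powr n \<le> schroeder x" and "schroeder x < \<gamma> powr (n + 1)"
    using gamma_gt_1 by (simp_all add: schroeder_on_interval[OF assms] powr_add)
qed

lemma schroeder_pos:
  assumes "0 < x"
  shows "0 < schroeder x"
proof -
  obtain n where "orbit n \<le> x" and "x < orbit (n + 1)"
    using orbit_interval[OF assms] .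
  then have "\<gamma> powr n \<le> schroeder x" by (rule schroeder_on_interval_bounds)
  moreover have "0 < \<gamma> powr n" using gamma_gt_1 by simp
  ultimately show ?thesis by linarith
qed

lemma strict_mono_schroeder: "strict_mono schroeder"
proof (rule strict_monoI)
  fix x y :: real
  assume "x < y"
  show "schroeder x < schroeder y"
  proof (cases "0 < x")
    case False
    then show ?thesis
      using \<open>x < y\<close> schroeder_pos[of y] by (cases "0 < y") (simp_all add: schroeder_def)
  next
    case True
    obtain n where n: "orbit n \<le> x" "x < orbit (n + 1)"
      using orbit_interval[OF True] .
    obtain m where m: "orbit m \<le> y" "y < orbit (m + 1)"
      using orbit_interval[of y] True \<open>x < y\<close> by auto
    have "orbit n < orbit (m + 1)" using n m \<open>x < y\<close> by linarith
    then have "n \<le> m" using strict_mono_less[OF strict_mono_orbit] by simp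
    show ?thesis
    proof (cases "n = m")
      case True
      have "iter (- n) x < iter (- n) y"
        using iter_less_iff \<open>0 < x\<close> \<open>x < y\<close> by simp
      then show ?thesis
        using gamma_gt_1 True
        by (simp add: schroeder_on_interval[OF n] schroeder_on_interval[OF m] phi_less_iff)
    next
      case False
      then have "\<gamma> powr (n + 1) \<le> \<gamma> powr m"
        using \<open>n \<le> m\<close> gamma_gt_1 by (intro powr_mono) auto
      then show ?thesis
        using schroeder_on_interval_bounds(2)[OF n] schroeder_on_interval_bounds(1)[OF m] by simp
    qed
  qed
qed

lemma schroeder_attains:
  assumes "0 < y"
  shows "\<exists>x. schroeder x = y"
proof -
  define n where "n = \<lfloor>log \<gamma> y\<rfloor>"
  define t where "t = y / \<gamma> powr n"
  have "1 \<le> t" and "t < \<gamma>"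
    using powr_floor_log_bracket[OF gamma_gt_1 assms] gamma_gt_1
    by (simp_all add: t_def n_def powr_add field_simps)
  then obtain z where z: "1 \<le> z" "z < f 1" "phi z = t"
    by (rule phi_surj)
  define x where "x = iter n z"
  have "orbit n \<le> x"
    using iter_le_iff[of 1 z n] z by (simp add: x_def orbit_def)
  moreover have "x < orbit (n + 1)"
    using iter_less_iff[of z "f 1" n] z iter_orbit[of n 1] by (simp add: x_def)
  moreover have "iter (- n) x = z"
    using iter_add[of z "- n" n] z by (simp add: x_def)
  ultimately have "schroeder x = y"
    using z gamma_gt_1 by (simp add: schroeder_on_interval t_def)
  then show ?thesis ..
qed

lemma surj_schroeder: "surj schroeder"
proof -
  have "\<exists>x. y = schroeder x" for y
  proof (cases "0 < y")
    case True
    then show ?thesis using schroeder_attains by metis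
  next
    case False
    then have "y = schroeder y" by (simp add: schroeder_def)
    then show ?thesis ..
  qed
  then show ?thesis by (simp add: surj_def)
qed

lemma continuous_schroeder: "continuous_on UNIV schroeder"
  using strict_mono_schroeder surj_schroeder
  by (intro continuous_onI_mono) (simp_all add: strict_mono_less_eq)

lemma schroeder_functional_equation:
  assumes "0 \<le> x"
  shows "schroeder (f x) = \<gamma> * schroeder x"
proof (cases "x = 0")
  case True
  then show ?thesis by (simp add: zero schroeder_def)
next
  case False
  with assms have "0 < x" by simp
  obtain n where n: "orbit n \<le> x" "x < orbit (n + 1)"
    using orbit_interval[OF \<open>0 < x\<close>] .
  have "orbit (n + 1) \<le> f x"
    using le_iff[of "orbit n" x] n(1) orbit_pos[of n] assms by (simp add: orbit_succ)
  moreover have "f x < orbit (n + 1 + 1)"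
    using less_iff[of x "orbit (n + 1)"] n(2) orbit_pos[of "n + 1"] assms orbit_succ[of "n + 1"]
    by simp
  moreover have "iter (- (n + 1)) (f x) = iter (- n) x"
    using iter_add[OF assms, of "- (n + 1)" 1] iter_succ[OF assms, of 0] by simp
  ultimately show ?thesis
    using n gamma_gt_1 by (simp add: schroeder_on_interval powr_add)
qed

lemma class_K_schroeder: "class_K schroeder"
proof -
  have "continuous_on {0..} schroeder"
    using continuous_on_subset[OF continuous_schroeder] by simp
  moreover have "strict_mono_on {0..} schroeder"
    using strict_mono_schroeder by (simp add: strict_mono_on_def strict_mono_less)
  moreover have "schroeder x \<ge> 0" if "x \<ge> 0" for x
    using that schroeder_pos[of x] by (cases "x = 0") (simp_all add: schroeder_def)
  ultimately show ?thesis by (simp add: class_K_def schroeder_def)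
qed

end

lemma class_K_inf_image:
  assumes "class_K_inf f"
  shows "f ` {0..} = {0..}"
proof
  show "f ` {0..} \<subseteq> {0..}"
    using assms by (auto simp: class_K_inf_def class_K_def)
  show "{0..} \<subseteq> f ` {0..}"
  proof
    fix y :: real
    assume "y \<in> {0..}"
    obtain b where b: "0 \<le> b" "y \<le> f b"
      using assms filterlim_at_top[of f at_top] eventually_at_top_linorder
      by (metis class_K_inf_def max.cobounded1 max.cobounded2)
    moreover have "f 0 \<le> y"
      using assms \<open>y \<in> {0..}\<close> by (simp add: class_K_inf_def class_K_def)
    moreover have "continuous_on {0..b} f"
      using assms by (auto simp: class_K_inf_def class_K_def intro: continuous_on_subset)
    ultimately show "y \<in> f ` {0..}"
      using IVT'[of f 0 y b] by auto
  qed
qed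

theorem mainTheorem14:
  fixes f :: "real \<Rightarrow> real" and \<gamma> :: real
  assumes "\<gamma> > 1"
    and "class_K_inf f"
    and "\<And>x. x > 0 \<Longrightarrow> f x > x"
  shows "\<exists>g. class_K g \<and> (\<forall>x\<ge>0. g (f x) = \<gamma> * g x)"
proof -
  interpret schroeder_construction f \<gamma>
  proof
    show "strict_mono_on {0..} f" and "continuous_on {0..} f"
      using assms(2) by (simp_all add: class_K_inf_def class_K_def)
  qed (use assms class_K_inf_image in auto)
  show ?thesis
    using class_K_schroeder schroeder_functional_equation by blast
qed

end
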